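(* Let $p>1$ and let $\omega\ge0$ be a weight on $\mathbb R$ with $\log\omega\in B_p^{\mathbb R}(\mathbb R)$. Then $\log\omega$ lies in the closure of $L^\infty(\mathbb R)$ with respect to the BMO norm $\|\cdot\|_*$. In particular $\omega\in A_2\subset A_\infty$.
   Context: $B_p^{\mathbb R}(\mathbb R)$ is the set of real measurable $u$ on $\mathbb R$ with $\int\!\int\frac{|u(t)-u(s)|^p}{|t-s|^2}dsdt<\infty$. $\|u\|_*=\sup_I|I|^{-1}\int_I|u-u_I|$ over bounded intervals, $u_I$ the mean over $I$. A weight is a locally integrable $\omega\ge0$; $\omega\in A_2$ if $\sup_I\left(|I|^{-1}\int_I\omega\right)\left(|I|^{-1}\int_I\omega^{-1}\right)<\infty$; $A_\infty=\bigcup_{p>1}A_p$ with $A_p$ the Muckenhoupt classes. *)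

theory Defs
  imports "HOL-Analysis.Analysis"
begin

definition loc_integrable :: "(real \<Rightarrow> real) \<Rightarrow> bool" where
  "loc_integrable u \<longleftrightarrow> (\<forall>a b. set_integrable lborel {a..b} u)"

definition is_weight :: "(real \<Rightarrow> real) \<Rightarrow> bool" where
  "is_weight w \<longleftrightarrow> (\<forall>t. 0 \<le> w t) \<and> loc_integrable w"

definition mean_on :: "(real \<Rightarrow> real) \<Rightarrow> real \<Rightarrow> real \<Rightarrow> real" where
  "mean_on u a b = (LBINT t:{a..b}. u t) / (b - a)"

definition mean_osc :: "(real \<Rightarrow> real) \<Rightarrow> real \<Rightarrow> real \<Rightarrow> real" where
  "mean_osc u a b = (LBINT t:{a..b}. \<bar>u t - mean_on u a b\<bar>) / (b - a)"

text \<open>BMO seminorm \<open>\<parallel>u\<parallel>_*\<close> (supremum over bounded intervals), in the extended reals;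
  only meaningful for locally integrable u.\<close>
definition bmo_norm :: "(real \<Rightarrow> real) \<Rightarrow> ereal" where
  "bmo_norm u = (SUP I \<in> {(a, b). a < (b::real)}. ereal (mean_osc u (fst I) (snd I)))"

definition in_BMO_closure_Linf :: "(real \<Rightarrow> real) \<Rightarrow> bool" where
  "in_BMO_closure_Linf u \<longleftrightarrow> loc_integrable u \<and>
     (\<forall>\<epsilon>>0. \<exists>g. g \<in> borel_measurable lborel \<and> bounded (range g) \<and>
        loc_integrable (\<lambda>t. u t - g t) \<and> bmo_norm (\<lambda>t. u t - g t) < ereal \<epsilon>)"

definition Bp_real :: "real \<Rightarrow> (real \<Rightarrow> real) set" where
  "Bp_real p = {u. u \<in> borel_measurable lborel \<and>
     (\<integral>\<^sup>+ t. \<integral>\<^sup>+ s. ennreal (\<bar>u t - u s\<bar> powr p / \<bar>t - s\<bar>\<^sup>2) \<partial>lborel \<partial>lborel) < \<infinity>}"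

text \<open>The dual integral is taken as an extended nonnegative integral, with w^{-1/(p-1)} = \<infinity> where w = 0.\<close>
definition dual_weight :: "real \<Rightarrow> (real \<Rightarrow> real) \<Rightarrow> real \<Rightarrow> ennreal" where
  "dual_weight p w t = (if 0 < w t then ennreal (w t powr (-1 / (p - 1))) else \<infinity>)"

definition A_p :: "real \<Rightarrow> (real \<Rightarrow> real) set" where
  "A_p p = {w. is_weight w \<and>
     (\<exists>C::real. \<forall>a b. a < b \<longrightarrow>
        (\<integral>\<^sup>+ t\<in>{a..b}. dual_weight p w t \<partial>lborel) < \<infinity> \<and>
        mean_on w a b * (enn2real (\<integral>\<^sup>+ t\<in>{a..b}. dual_weight p w t \<partial>lborel) / (b - a)) powr (p - 1) \<le> C)}"

abbreviation A_2 :: "(real \<Rightarrow> real) set" where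
  "A_2 \<equiv> A_p 2"

definition A_infty :: "(real \<Rightarrow> real) set" where
  "A_infty = (\<Union>p\<in>{p. 1 < p}. A_p p)"

end

theory Submission
  imports Defs
begin

text \<open>
  Write \<open>u = ln w\<close> and let \<open>E\<^sub>v(A, B)\<close> be the \<open>B\<^sub>p\<close> energy of \<open>v\<close> on \<open>A \<times> B\<close>. Pointwise,
  \<open>\<bar>v t - v s\<bar> \<le> e + e\<^sup>1\<^sup>-\<^sup>p \<bar>v t - v s\<bar>\<^sup>p\<close>; integrating over \<open>I \<times> I\<close> and optimising in \<open>e\<close> gives
  \<open>mean_osc v I \<le> 2 E\<^sub>v(I, I)\<^sup>1\<^sup>/\<^sup>p\<close>. Truncating \<open>u\<close> at height \<open>N\<close> leaves a remainder \<open>h\<close>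
  whose energy is at most the energy of \<open>u\<close> on pairs where \<open>\<bar>u\<bar> > N\<close>; this tends to \<open>0\<close>, so
  \<open>u\<close> is a BMO limit of the bounded functions \<open>trunc N \<circ> u\<close>.

  For \<open>A\<^sub>2\<close>, fix \<open>N\<close> so that \<open>E\<^sub>h\<close> is small on all pairs of intervals. Halving \<open>I\<close> repeatedly,
  the means of the two halves differ by at most a power of their cross energy, and the energy is
  superadditive; an induction over the dyadic generations then bounds the average of
  \<open>exp (h - h\<^sub>I)\<close> over \<open>I\<close> by a constant independent of \<open>I\<close> (first for bounded \<open>h\<close>, then in general
  by truncation and Fatou). The same holds for \<open>-h\<close>, and \<open>w = exp (trunc N \<circ> u) exp h\<close> with a
  bounded first factor, which is the \<open>A\<^sub>2\<close> condition.
\<close>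

lemma le_eps_plus_powr:
  fixes x e p :: real
  assumes "0 \<le> x" "0 < e" "1 < p"
  shows "x \<le> e + e powr (1 - p) * x powr p"
proof (cases "x \<le> e")
  case True
  then show ?thesis by (simp add: add_increasing2)
next
  case False
  then have xe: "e < x" by simp
  have "e powr (1 - p) * x powr p = x * (x / e) powr (p - 1)"
    using xe assms by (simp add: powr_divide powr_diff powr_minus divide_simps)
  moreover have "(x / e) powr (p - 1) \<ge> 1"
    using xe assms by (intro ge_one_powr_ge_zero) auto
  ultimately have "x \<le> e powr (1 - p) * x powr p"
    using xe assms by (metis dual_order.strict_trans2 less_eq_real_def mult_le_cancel_left1 not_le)
  then show ?thesis using assms by simp
qed

text \<open>Optimising over \<open>e\<close> in \<open>le_eps_plus_powr\<close>; this is how Hoelder's inequality is avoided below.\<close>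
lemma le_powr_if_eps_bound:
  fixes X A p :: real
  assumes "1 < p" "0 \<le> A" "\<And>e. 0 < e \<Longrightarrow> X \<le> e + e powr (1 - p) * A"
  shows "X \<le> 2 * A powr (1 / p)"
proof (cases "A = 0")
  case True
  then have "X \<le> e" if "0 < e" for e using assms(3) that by simp
  then have "X \<le> 0" by (meson dense not_le)
  then show ?thesis using True by simp
next
  case False
  with assms have A: "0 < A" by simp
  have "(A powr (1/p)) powr (1 - p) * A = A powr ((1/p) * (1 - p) + 1)"
    using A by (simp add: powr_powr powr_add)
  also have "(1/p) * (1 - p) + 1 = 1/p" using assms by (simp add: field_simps)
  finally show ?thesis using assms(3)[of "A powr (1/p)"] A by simp
qed

lemma powr_midpoint_le:
  fixes A B p :: real
  assumes p: "1 \<le> p" and AB: "0 \<le> A" "0 \<le> B"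
  shows "((A + B) / 2) powr p \<le> (A powr p + B powr p) / 2"
proof (cases "A = 0 \<or> B = 0")
  case True
  have "(C / 2) powr p \<le> C powr p / 2" if "0 \<le> C" for C :: real
  proof -
    have "2 powr 1 \<le> 2 powr p" using p by (intro powr_mono) auto
    then have "C powr p * 2 \<le> C powr p * 2 powr p" by (intro mult_left_mono) auto
    then show ?thesis using that by (simp add: powr_divide divide_le_eq)
  qed
  with True AB show ?thesis by auto
next
  case False
  with AB have "A \<in> {0<..}" "B \<in> {0<..}" by auto
  from convex_onD[OF powr_convex[OF p] _ _ this, of "1/2"]
  show ?thesis by (simp add: add_divide_distrib)
qed

lemma powr_inverse_midpoint_le:
  fixes A B p :: real
  assumes p: "1 \<le> p" and AB: "0 \<le> A" "0 \<le> B"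
  shows "(A powr (1/p) + B powr (1/p)) / 2 \<le> 2 powr (-1/p) * (A + B) powr (1/p)"
proof -
  define a b where "a = A powr (1/p)" and "b = B powr (1/p)"
  have ab: "0 \<le> a" "0 \<le> b" "a powr p = A" "b powr p = B"
    using AB p by (auto simp: a_def b_def powr_powr)
  have "(((a + b) / 2) powr p) powr (1/p) \<le> ((A + B) / 2) powr (1/p)"
    using powr_midpoint_le[OF p ab(1,2)] ab p by (intro powr_mono2) auto
  then show ?thesis
    using ab p by (simp add: powr_powr a_def b_def powr_divide powr_minus_divide)
qed

lemma exp_half_le:
  fixes d :: real
  assumes "\<bar>d\<bar> \<le> 1"
  shows "exp (d / 2) \<le> 1 + \<bar>d\<bar>"
proof -
  have "exp (\<bar>d\<bar> / 2) \<le> 1 + \<bar>d\<bar> / 2 + (\<bar>d\<bar> / 2)^2"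
    using exp_bound[of "\<bar>d\<bar> / 2"] assms by simp
  also have "(\<bar>d\<bar> / 2)^2 \<le> \<bar>d\<bar> / 2 * 1"
    unfolding power2_eq_square using assms by (intro mult_left_mono) auto
  finally have "exp (\<bar>d\<bar> / 2) \<le> 1 + \<bar>d\<bar>" by simp
  moreover have "exp (d / 2) \<le> exp (\<bar>d\<bar> / 2)" by simp
  ultimately show ?thesis by linarith
qed

lemma cosh_half_le:
  fixes d :: real
  assumes "\<bar>d\<bar> \<le> 1"
  shows "exp (d / 2) + exp (- d / 2) \<le> 2 + d^2 / 2"
proof -
  define y where "y = \<bar>d\<bar> / 2"
  have y: "0 \<le> y" "y \<le> 1" using assms by (auto simp: y_def)
  have "exp (-y) = 1 / exp y" by (simp add: exp_minus field_simps)
  also have "\<dots> \<le> 1 / (1 + y)" using y by (intro divide_left_mono) auto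
  also have "\<dots> \<le> 1 - y + y^2"
  proof -
    have "1 \<le> (1 + y) * (1 - y + y^2)"
      using y by (simp add: algebra_simps power2_eq_square)
    then show ?thesis using y by (simp add: divide_le_eq mult.commute)
  qed
  finally have "exp y + exp (-y) \<le> 2 + 2 * y^2"
    using exp_bound[OF y] by simp
  moreover have "exp (d / 2) + exp (- d / 2) = exp y + exp (-y)"
    by (cases "0 \<le> d") (auto simp: y_def)
  ultimately show ?thesis by (simp add: y_def power2_eq_square)
qed

text \<open>The constant satisfies \<open>dyadic_const p * (1 - \<theta>) = 2\<close> for \<open>\<theta> = (1 + 2 powr (-1/p)) / 2\<close>,
  which is what makes the induction in \<open>dyadic_step_le\<close> close.\<close>
definition dyadic_const :: "real \<Rightarrow> real" where
  "dyadic_const p = 4 / (1 - 2 powr (-1/p))"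

lemma dyadic_const_pos: "0 < p \<Longrightarrow> 0 < dyadic_const p"
proof -
  assume "0 < p"
  then have "2 powr (-1/p) < 2 powr 0" by (intro powr_less_mono) auto
  then show ?thesis unfolding dyadic_const_def by simp
qed

lemma exp_half_average_le:
  fixes d K a b :: real
  assumes "\<bar>d\<bar> \<le> 1" "0 \<le> K" "0 \<le> a" "0 \<le> b"
  shows "(exp (d/2) * (1 + K * a) + exp (-d/2) * (1 + K * b)) / 2
    \<le> 1 + d^2 / 4 + K * ((1 + \<bar>d\<bar>) * ((a + b) / 2))"
proof -
  have "exp (d/2) * a + exp (-d/2) * b \<le> (1 + \<bar>d\<bar>) * a + (1 + \<bar>d\<bar>) * b"
    using exp_half_le[of d] exp_half_le[of "-d"] assms by (intro add_mono mult_right_mono) auto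
  then have "(exp (d/2) * a + exp (-d/2) * b) / 2 \<le> (1 + \<bar>d\<bar>) * ((a + b) / 2)"
    by (simp add: distrib_left)
  with assms(2) have "K * (exp (d/2) * a + exp (-d/2) * b) / 2 \<le> K * ((1 + \<bar>d\<bar>) * ((a + b) / 2))"
    by (metis mult_left_mono times_divide_eq_right)
  moreover have "(exp (d/2) + exp (-d/2)) / 2 \<le> 1 + d^2 / 4"
    using cosh_half_le[OF assms(1)] by simp
  ultimately show ?thesis
    by (simp add: algebra_simps add_divide_distrib)
qed

lemma dyadic_step_le:
  fixes p d e1 e2 e12 e :: real
  assumes p: "1 < p" and nn: "0 \<le> e1" "0 \<le> e2" "0 \<le> e12" and sum: "e1 + e2 + e12 \<le> e"
    and d: "\<bar>d\<bar> \<le> 2 * (4 * e12) powr (1/p)" "\<bar>d\<bar> \<le> 1" "\<bar>d\<bar> \<le> (2 powr (1/p) - 1) / 2"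
  shows "(exp (d/2) * (1 + dyadic_const p * e1 powr (1/p))
           + exp (-d/2) * (1 + dyadic_const p * e2 powr (1/p))) / 2
         \<le> 1 + dyadic_const p * e powr (1/p)"
proof -
  define q K s th where "q = 1/p" and "K = dyadic_const p" and "s = 2 powr (-1/p)" and "th = (1 + s) / 2"
  have q: "0 < q" "q < 1" using p by (auto simp: q_def)
  have "2 powr (-q) < 2 powr 0" using q by (intro powr_less_mono) auto
  then have s: "0 < s" "s < 1" by (auto simp: s_def q_def)
  have K: "0 < K" "K * (1 - th) = 2"
    using s unfolding K_def dyadic_const_def s_def[symmetric] th_def by (simp_all add: field_simps)
  have "d^2 \<le> \<bar>d\<bar>"
    using mult_left_mono[OF d(2), of "\<bar>d\<bar>"] by (simp add: power2_eq_square)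
  moreover have "(4 * e12) powr q \<le> 4 * e12 powr q"
    using nn powr_mono[of q 1 4] q by (simp add: powr_mult mult_right_mono)
  ultimately have e12: "d^2 / 4 \<le> 2 * e12 powr q" using d(1) by (simp add: q_def)
  have ds: "(1 + \<bar>d\<bar>) * s \<le> th"
  proof -
    have "(1 + 2 * \<bar>d\<bar>) * s \<le> 2 powr q * s" using d(3) s by (simp add: q_def)
    also have "2 powr q * s = 1" by (simp add: s_def q_def powr_minus_divide)
    finally show ?thesis by (simp add: th_def algebra_simps)
  qed
  have "(exp (d/2) * (1 + K * e1 powr q) + exp (-d/2) * (1 + K * e2 powr q)) / 2
      \<le> 1 + d^2 / 4 + K * ((1 + \<bar>d\<bar>) * ((e1 powr q + e2 powr q) / 2))"
    using K(1) d(2) by (intro exp_half_average_le) auto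
  also have "(1 + \<bar>d\<bar>) * ((e1 powr q + e2 powr q) / 2) \<le> ((1 + \<bar>d\<bar>) * s) * (e1 + e2) powr q"
    using powr_inverse_midpoint_le[of p e1 e2] p nn
    unfolding mult.assoc q_def s_def by (intro mult_left_mono) auto
  also have "((1 + \<bar>d\<bar>) * s) * (e1 + e2) powr q \<le> th * e powr q"
    using ds s nn sum q by (intro mult_mono powr_mono2) (auto simp: th_def)
  finally have "(exp (d/2) * (1 + K * e1 powr q) + exp (-d/2) * (1 + K * e2 powr q)) / 2
      \<le> 1 + 2 * e powr q + K * (th * e powr q)"
    using e12 K(1) powr_mono2[of q e12 e] nn sum q by (smt (verit) mult_left_mono)
  also have "\<dots> = 1 + (K * th + K * (1 - th)) * e powr q"
    unfolding K(2) by (simp add: algebra_simps)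
  also have "\<dots> = 1 + K * e powr q"
    by (simp add: algebra_simps)
  finally show ?thesis by (simp add: K_def q_def)
qed

lemma abs_exp_diff_le:
  fixes a b K :: real
  assumes "a \<le> K" "b \<le> K"
  shows "\<bar>exp a - exp b\<bar> \<le> exp K * \<bar>a - b\<bar>"
proof -
  have *: "exp b - exp a \<le> exp K * (b - a)" if "a \<le> b" "b \<le> K" for a b :: real
  proof -
    have "1 - exp (a - b) \<le> b - a" using exp_ge_add_one_self[of "a - b"] by linarith
    have "exp b - exp a = exp b * (1 - exp (a - b))" by (simp add: algebra_simps exp_diff)
    also have "\<dots> \<le> exp b * (b - a)"
      using \<open>1 - exp (a - b) \<le> b - a\<close> by (intro mult_left_mono) auto
    also have "\<dots> \<le> exp K * (b - a)" using that by (intro mult_right_mono) auto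
    finally show ?thesis .
  qed
  show ?thesis
    using *[of a b] *[of b a] assms by (cases "a \<le> b") (auto simp: abs_if)
qed

definition trunc :: "real \<Rightarrow> real \<Rightarrow> real" where
  "trunc M z = max (- M) (min M z)"

lemma trunc_measurable [measurable]: "trunc M \<in> borel_measurable borel"
  unfolding trunc_def by measurable

lemma abs_trunc_le: "0 \<le> M \<Longrightarrow> \<bar>trunc M z\<bar> \<le> M"
  unfolding trunc_def by auto

lemma trunc_eq: "\<bar>z\<bar> \<le> M \<Longrightarrow> trunc M z = z"
  unfolding trunc_def by auto

lemma abs_trunc_diff_le: "\<bar>trunc M a - trunc M b\<bar> \<le> \<bar>a - b\<bar>"
  unfolding trunc_def by (auto simp: max_def min_def abs_if)

lemma abs_trunc_remainder_diff_le: "\<bar>(a - trunc M a) - (b - trunc M b)\<bar> \<le> \<bar>a - b\<bar>"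
  unfolding trunc_def by (auto simp: max_def min_def abs_if)

section \<open>The Besov energy\<close>

definition besov_kernel :: "(real \<Rightarrow> real) \<Rightarrow> real \<Rightarrow> real \<Rightarrow> real \<Rightarrow> ennreal" where
  "besov_kernel v p t s = ennreal (\<bar>v t - v s\<bar> powr p / \<bar>t - s\<bar>^2)"

definition besov_energy :: "(real \<Rightarrow> real) \<Rightarrow> real \<Rightarrow> real set \<Rightarrow> real set \<Rightarrow> ennreal" where
  "besov_energy v p A B =
     (\<integral>\<^sup>+t. (\<integral>\<^sup>+s. besov_kernel v p t s * indicator B s \<partial>lborel) * indicator A t \<partial>lborel)"

definition abs_diff_integral :: "(real \<Rightarrow> real) \<Rightarrow> real set \<Rightarrow> real set \<Rightarrow> ennreal" where
  "abs_diff_integral v A B =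
     (\<integral>\<^sup>+t. (\<integral>\<^sup>+s. ennreal \<bar>v t - v s\<bar> * indicator B s \<partial>lborel) * indicator A t \<partial>lborel)"

lemma besov_kernel_measurable_pair:
  assumes [measurable]: "v \<in> borel_measurable borel"
  shows "(\<lambda>(t, s). besov_kernel v p t s) \<in> borel_measurable (lborel \<Otimes>\<^sub>M lborel)"
  unfolding besov_kernel_def by measurable

lemma besov_kernel_measurable [measurable]:
  assumes [measurable]: "v \<in> borel_measurable borel"
  shows "besov_kernel v p t \<in> borel_measurable borel"
  unfolding besov_kernel_def by measurable

lemma besov_kernel_integral_measurable [measurable]:
  assumes [measurable]: "v \<in> borel_measurable borel" "B \<in> sets borel"
  shows "(\<lambda>t. \<integral>\<^sup>+s. besov_kernel v p t s * indicator B s \<partial>lborel) \<in> borel_measurable borel"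
proof -
  have "(\<lambda>(t, s). besov_kernel v p t s * indicator B s) \<in> borel_measurable (lborel \<Otimes>\<^sub>M lborel)"
    unfolding besov_kernel_def by measurable
  from lborel.borel_measurable_nn_integral[OF this] show ?thesis by simp
qed

lemma nn_integral_Icc_split:
  fixes x m y :: real
  assumes "x \<le> m" "m \<le> y" and [measurable]: "f \<in> borel_measurable borel"
  shows "(\<integral>\<^sup>+t. f t * indicator {x..y} t \<partial>lborel)
       = (\<integral>\<^sup>+t. f t * indicator {x..m} t \<partial>lborel) + (\<integral>\<^sup>+t. f t * indicator {m..y} t \<partial>lborel)"
proof -
  have "AE t in lborel. f t * indicator {x..y} t = f t * indicator {x..m} t + f t * indicator {m..y} t"
    using AE_lborel_singleton[of m] by eventually_elim (use assms in \<open>auto simp: indicator_def\<close>)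
  then have "(\<integral>\<^sup>+t. f t * indicator {x..y} t \<partial>lborel)
      = (\<integral>\<^sup>+t. f t * indicator {x..m} t + f t * indicator {m..y} t \<partial>lborel)"
    by (rule nn_integral_cong_AE)
  also have "\<dots> = (\<integral>\<^sup>+t. f t * indicator {x..m} t \<partial>lborel) + (\<integral>\<^sup>+t. f t * indicator {m..y} t \<partial>lborel)"
    by (rule nn_integral_add) auto
  finally show ?thesis .
qed

lemma besov_energy_Icc_split:
  assumes "x \<le> m" "m \<le> y" and v[measurable]: "v \<in> borel_measurable borel"
  shows "besov_energy v p {x..m} {x..m} + besov_energy v p {m..y} {m..y} + besov_energy v p {x..m} {m..y}
    \<le> besov_energy v p {x..y} {x..y}"
proof -
  define I where "I B t = (\<integral>\<^sup>+s. besov_kernel v p t s * indicator B s \<partial>lborel)" for B t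
  have [measurable]: "I B \<in> borel_measurable borel" if [measurable]: "B \<in> sets borel" for B
    unfolding I_def by measurable
  have split: "I {x..y} t = I {x..m} t + I {m..y} t" for t
    unfolding I_def by (rule nn_integral_Icc_split[OF assms(1,2)]) measurable
  have "besov_energy v p {x..y} {x..y} = (\<integral>\<^sup>+t. (I {x..m} t + I {m..y} t) * indicator {x..y} t \<partial>lborel)"
    unfolding besov_energy_def I_def[symmetric] split ..
  also have "\<dots> = (\<integral>\<^sup>+t. (I {x..m} t + I {m..y} t) * indicator {x..m} t \<partial>lborel)
                + (\<integral>\<^sup>+t. (I {x..m} t + I {m..y} t) * indicator {m..y} t \<partial>lborel)"
    by (rule nn_integral_Icc_split[OF assms(1,2)]) measurable
  also have "(\<integral>\<^sup>+t. (I {x..m} t + I {m..y} t) * indicator {x..m} t \<partial>lborel)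
      = besov_energy v p {x..m} {x..m} + besov_energy v p {x..m} {m..y}"
    unfolding besov_energy_def I_def[symmetric] distrib_right by (rule nn_integral_add) measurable
  also have "(\<integral>\<^sup>+t. (I {x..m} t + I {m..y} t) * indicator {m..y} t \<partial>lborel)
      = besov_energy v p {m..y} {x..m} + besov_energy v p {m..y} {m..y}"
    unfolding besov_energy_def I_def[symmetric] distrib_right by (rule nn_integral_add) measurable
  finally show ?thesis
    by (metis add.commute add.left_commute add_increasing2 le_iff_add zero_le)
qed

lemma besov_energy_mono:
  assumes "\<And>t s. \<bar>v t - v s\<bar> \<le> \<bar>h t - h s\<bar>" "0 < p"
  shows "besov_energy v p A B \<le> besov_energy h p A B"
  unfolding besov_energy_def besov_kernel_def using assms
  by (intro nn_integral_mono mult_right_mono ennreal_leI divide_right_mono powr_mono2) auto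

lemma besov_energy_uminus: "besov_energy (\<lambda>t. - h t) p A B = besov_energy h p A B"
  unfolding besov_energy_def besov_kernel_def by (simp add: abs_minus_commute)

lemma abs_diff_le_besov_kernel:
  fixes v :: "real \<Rightarrow> real"
  assumes p: "1 < p" and e: "0 < e" and D: "\<bar>t - s\<bar> \<le> D"
  shows "ennreal \<bar>v t - v s\<bar> \<le> ennreal e + ennreal (e powr (1 - p) * D^2) * besov_kernel v p t s"
proof -
  define k where "k = \<bar>v t - v s\<bar> powr p / \<bar>t - s\<bar>^2"
  have "\<bar>v t - v s\<bar> powr p \<le> D^2 * k"
  proof (cases "t = s")
    case False
    have "\<bar>t - s\<bar>^2 \<le> D^2" using D by (intro power_mono) auto
    then have "\<bar>v t - v s\<bar> powr p * \<bar>t - s\<bar>^2 \<le> \<bar>v t - v s\<bar> powr p * D^2"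
      by (intro mult_left_mono) auto
    with False show ?thesis by (simp add: k_def field_simps)
  qed (simp add: k_def)
  then have "\<bar>v t - v s\<bar> \<le> e + e powr (1 - p) * D^2 * k"
    using le_eps_plus_powr[OF _ e p, of "\<bar>v t - v s\<bar>"] mult_left_mono[of _ _ "e powr (1 - p)"]
    by (smt (verit, ccfv_SIG) mult.assoc powr_ge_zero)
  then have "ennreal \<bar>v t - v s\<bar> \<le> ennreal (e + e powr (1 - p) * D^2 * k)"
    by (rule ennreal_leI)
  also have "\<dots> = ennreal e + ennreal (e powr (1 - p) * D^2 * k)"
    using e by (intro ennreal_plus) (auto simp: k_def)
  also have "\<dots> = ennreal e + ennreal (e powr (1 - p) * D^2) * besov_kernel v p t s"
    unfolding besov_kernel_def k_def[symmetric] by (subst ennreal_mult) (auto simp: k_def)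
  finally show ?thesis .
qed

lemma abs_diff_integral_le_besov_energy:
  fixes v :: "real \<Rightarrow> real" and A B :: "real set"
  assumes p: "1 < p" and e: "0 < e" and v[measurable]: "v \<in> borel_measurable borel"
    and [measurable]: "A \<in> sets borel" "B \<in> sets borel"
    and D: "\<And>t s. t \<in> A \<Longrightarrow> s \<in> B \<Longrightarrow> \<bar>t - s\<bar> \<le> D"
  shows "abs_diff_integral v A B
    \<le> ennreal e * emeasure lborel B * emeasure lborel A + ennreal (e powr (1-p) * D^2) * besov_energy v p A B"
proof -
  define c where "c = ennreal (e powr (1-p) * D^2)"
  define I where "I t = (\<integral>\<^sup>+s. besov_kernel v p t s * indicator B s \<partial>lborel)" for t
  have [measurable]: "I \<in> borel_measurable borel" unfolding I_def by measurable
  have inner: "(\<integral>\<^sup>+s. ennreal \<bar>v t - v s\<bar> * indicator B s \<partial>lborel) \<le> ennreal e * emeasure lborel B + c * I t"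
    if "t \<in> A" for t
  proof -
    have "(\<integral>\<^sup>+s. ennreal \<bar>v t - v s\<bar> * indicator B s \<partial>lborel)
        \<le> (\<integral>\<^sup>+s. ennreal e * indicator B s + c * (besov_kernel v p t s * indicator B s) \<partial>lborel)"
      by (intro nn_integral_mono)
        (auto simp: indicator_def c_def intro!: abs_diff_le_besov_kernel[OF p e] D that)
    also have "\<dots> = ennreal e * emeasure lborel B + c * I t"
      unfolding I_def by (subst nn_integral_add) (auto simp: nn_integral_cmult nn_integral_cmult_indicator)
    finally show ?thesis .
  qed
  have "abs_diff_integral v A B
      \<le> (\<integral>\<^sup>+t. (ennreal e * emeasure lborel B) * indicator A t + c * (I t * indicator A t) \<partial>lborel)"
    unfolding abs_diff_integral_def
  proof (intro nn_integral_mono)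
    fix t
    show "(\<integral>\<^sup>+s. ennreal \<bar>v t - v s\<bar> * indicator B s \<partial>lborel) * indicator A t
        \<le> ennreal e * emeasure lborel B * indicator A t + c * (I t * indicator A t)"
      by (cases "t \<in> A") (simp_all add: inner)
  qed
  also have "\<dots> = ennreal e * emeasure lborel B * emeasure lborel A + c * besov_energy v p A B"
    unfolding besov_energy_def I_def[symmetric]
    by (subst nn_integral_add) (auto simp: nn_integral_cmult nn_integral_cmult_indicator)
  finally show ?thesis unfolding c_def .
qed

section \<open>Means and oscillation\<close>

lemma set_integrable_const_Icc: "set_integrable lborel {x..y::real} (\<lambda>_. c :: real)"
  unfolding set_integrable_def by (simp add: integrable_indicator_iff emeasure_lborel_Icc_eq)

lemma set_integral_const_Icc: "x \<le> y \<Longrightarrow> (LBINT s:{x..y::real}. c) = (y - x) * c"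
  by (simp add: set_integral_const)

lemma set_integrable_Icc_bounded:
  fixes v :: "real \<Rightarrow> real"
  assumes [measurable]: "v \<in> borel_measurable borel" and "\<And>t. \<bar>v t\<bar> \<le> M"
  shows "set_integrable lborel {x..y} v"
  unfolding set_integrable_def
  by (rule integrableI_bounded_set[where A="{x..y}" and B=M])
    (use assms in \<open>auto simp: emeasure_lborel_Icc_eq indicator_def\<close>)

lemma set_integral_Icc_split:
  fixes f :: "real \<Rightarrow> real"
  assumes "x \<le> m" "m \<le> y" and f: "set_integrable lborel {x..y} f"
  shows "(LBINT t:{x..y}. f t) = (LBINT t:{x..m}. f t) + (LBINT t:{m..y}. f t)"
proof -
  have "(LBINT t:{x..m} \<union> {m..y}. f t) = (LBINT t:{x..m}. f t) + (LBINT t:{m..y}. f t)"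
    using assms AE_lborel_singleton[of m]
    by (intro set_integral_Un_AE set_integrable_subset[OF f]) (auto elim: eventually_mono)
  moreover have "{x..m} \<union> {m..y} = {x..y}" using assms by auto
  ultimately show ?thesis by simp
qed

lemma ennreal_set_integral_eq_nn_integral:
  fixes f :: "'a \<Rightarrow> real"
  assumes "set_integrable M A f" "\<And>t. t \<in> A \<Longrightarrow> 0 \<le> f t"
  shows "ennreal (LINT t:A|M. f t) = (\<integral>\<^sup>+t. ennreal (f t) * indicator A t \<partial>M)"
proof -
  have "ennreal (LINT t:A|M. f t) = (\<integral>\<^sup>+t. ennreal (indicator A t * f t) \<partial>M)"
    using assms unfolding set_integrable_def set_lebesgue_integral_def
    by (subst nn_integral_eq_integral) (auto simp: indicator_def)
  also have "\<dots> = (\<integral>\<^sup>+t. ennreal (f t) * indicator A t \<partial>M)"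
    by (intro nn_integral_cong) (auto simp: indicator_def)
  finally show ?thesis .
qed

lemma abs_set_integral_le_nn_integral:
  fixes f :: "'a \<Rightarrow> real"
  assumes "set_integrable M A f"
  shows "ennreal \<bar>LINT t:A|M. f t\<bar> \<le> (\<integral>\<^sup>+t. ennreal \<bar>f t\<bar> * indicator A t \<partial>M)"
proof -
  have "ennreal \<bar>LINT t:A|M. f t\<bar> \<le> ennreal (LINT t:A|M. \<bar>f t\<bar>)"
    using set_integral_norm_bound[OF assms] by (intro ennreal_leI) simp
  also have "\<dots> = (\<integral>\<^sup>+t. ennreal \<bar>f t\<bar> * indicator A t \<partial>M)"
    using assms by (intro ennreal_set_integral_eq_nn_integral set_integrable_abs) auto
  finally show ?thesis .
qed

lemma set_integral_diff_mean:
  assumes "x < y" "set_integrable lborel {x..y} v"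
  shows "(LBINT t:{x..y}. v t - c) = (y - x) * (mean_on v x y - c)"
  using assms
  by (simp add: set_integral_diff(2)[OF _ set_integrable_const_Icc] set_integral_const_Icc
      mean_on_def field_simps)

lemma mean_on_uminus:
  "set_integrable lborel {x..y} v \<Longrightarrow> mean_on (\<lambda>t. - v t) x y = - mean_on v x y"
  unfolding mean_on_def by (simp add: set_integral_uminus)

lemma abs_mean_on_le:
  assumes "x < y" "set_integrable lborel {x..y} v" "\<And>t. \<bar>v t\<bar> \<le> M"
  shows "\<bar>mean_on v x y\<bar> \<le> M"
proof -
  have "\<bar>LBINT t:{x..y}. v t\<bar> \<le> (LBINT t:{x..y}. \<bar>v t\<bar>)"
    using set_integral_norm_bound[OF assms(2)] by simp
  also have "\<dots> \<le> (LBINT t:{x..y}. M)"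
    using assms by (intro set_integral_mono set_integrable_abs set_integrable_const_Icc) auto
  finally show ?thesis
    using assms(1) by (simp add: mean_on_def set_integral_const_Icc abs_div divide_le_eq mult.commute)
qed

lemma mean_on_midpoint:
  assumes "x < y" "set_integrable lborel {x..y} v"
  shows "mean_on v x y = (mean_on v x ((x+y)/2) + mean_on v ((x+y)/2) y) / 2"
proof -
  have "(LBINT t:{x..y}. v t) = (LBINT t:{x..(x+y)/2}. v t) + (LBINT t:{(x+y)/2..y}. v t)"
    using assms by (intro set_integral_Icc_split) auto
  moreover have "(x + y) / 2 - x = (y - x) / 2" "y - (x + y) / 2 = (y - x) / 2" by (simp_all add: field_simps)
  ultimately show ?thesis using assms(1) unfolding mean_on_def by (simp add: add_divide_distrib)
qed

lemma abs_diff_mean_integral_le_abs_diff_integral: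
  fixes v :: "real \<Rightarrow> real"
  assumes xy: "x < y" and vi: "set_integrable lborel {x..y} v"
    and [measurable]: "v \<in> borel_measurable borel" "A \<in> sets borel"
  shows "ennreal (y - x) * (\<integral>\<^sup>+t. ennreal \<bar>v t - mean_on v x y\<bar> * indicator A t \<partial>lborel)
    \<le> abs_diff_integral v A {x..y}"
proof -
  have "ennreal ((y - x) * \<bar>v t - mean_on v x y\<bar>)
      \<le> (\<integral>\<^sup>+s. ennreal \<bar>v t - v s\<bar> * indicator {x..y} s \<partial>lborel)" for t
  proof -
    have "(y - x) * \<bar>v t - mean_on v x y\<bar> = \<bar>LBINT s:{x..y}. v t - v s\<bar>"
      using set_integral_diff_mean[OF xy, of "\<lambda>s. v t - v s" "v t"] xy vi
      by (simp add: set_integral_diff(1)[OF set_integrable_const_Icc vi] mean_on_def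
          set_integral_diff(2)[OF set_integrable_const_Icc vi] set_integral_const_Icc abs_mult field_simps)
    also have "ennreal \<dots> \<le> (\<integral>\<^sup>+s. ennreal \<bar>v t - v s\<bar> * indicator {x..y} s \<partial>lborel)"
      by (intro abs_set_integral_le_nn_integral set_integral_diff(1)[OF set_integrable_const_Icc vi])
    finally show ?thesis by simp
  qed
  then have "(\<integral>\<^sup>+t. ennreal (y - x) * (ennreal \<bar>v t - mean_on v x y\<bar> * indicator A t) \<partial>lborel)
      \<le> abs_diff_integral v A {x..y}"
    unfolding abs_diff_integral_def using xy
    by (intro nn_integral_mono) (auto simp: ennreal_mult' mult.assoc[symmetric] intro!: mult_right_mono)
  then show ?thesis by (subst (asm) nn_integral_cmult) auto
qed

lemma osc_integral_le_abs_diff_integral: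
  fixes v :: "real \<Rightarrow> real"
  assumes xy: "x < y" and vi: "set_integrable lborel {x..y} v" and [measurable]: "v \<in> borel_measurable borel"
  shows "ennreal ((y - x) * (LBINT t:{x..y}. \<bar>v t - mean_on v x y\<bar>)) \<le> abs_diff_integral v {x..y} {x..y}"
proof -
  have "ennreal (LBINT t:{x..y}. \<bar>v t - mean_on v x y\<bar>)
      = (\<integral>\<^sup>+t. ennreal \<bar>v t - mean_on v x y\<bar> * indicator {x..y} t \<partial>lborel)"
    using vi by (intro ennreal_set_integral_eq_nn_integral set_integrable_abs
        set_integral_diff(1)[OF _ set_integrable_const_Icc]) auto
  moreover have "0 \<le> (LBINT t:{x..y}. \<bar>v t - mean_on v x y\<bar>)"
    unfolding set_lebesgue_integral_def by (intro Bochner_Integration.integral_nonneg) simp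
  ultimately show ?thesis
    using abs_diff_mean_integral_le_abs_diff_integral[OF xy vi] xy by (simp add: ennreal_mult)
qed

lemma abs_mean_diff_le_abs_diff_integral:
  fixes v :: "real \<Rightarrow> real"
  assumes xy1: "x1 < y1" and xy2: "x2 < y2"
    and vi1: "set_integrable lborel {x1..y1} v" and vi2: "set_integrable lborel {x2..y2} v"
    and [measurable]: "v \<in> borel_measurable borel"
  shows "ennreal ((y1 - x1) * (y2 - x2) * \<bar>mean_on v x1 y1 - mean_on v x2 y2\<bar>)
    \<le> abs_diff_integral v {x1..y1} {x2..y2}"
proof -
  define m2 where "m2 = mean_on v x2 y2"
  have "(y1 - x1) * \<bar>mean_on v x1 y1 - m2\<bar> = \<bar>LBINT t:{x1..y1}. v t - m2\<bar>"
    using set_integral_diff_mean[OF xy1 vi1] xy1 by (simp add: abs_mult)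
  also have "ennreal \<dots> \<le> (\<integral>\<^sup>+t. ennreal \<bar>v t - m2\<bar> * indicator {x1..y1} t \<partial>lborel)"
    by (intro abs_set_integral_le_nn_integral set_integral_diff(1)[OF vi1 set_integrable_const_Icc])
  finally have "ennreal (y2 - x2) * ennreal ((y1 - x1) * \<bar>mean_on v x1 y1 - m2\<bar>)
      \<le> ennreal (y2 - x2) * (\<integral>\<^sup>+t. ennreal \<bar>v t - m2\<bar> * indicator {x1..y1} t \<partial>lborel)"
    by (rule mult_left_mono) simp
  also have "\<dots> \<le> abs_diff_integral v {x1..y1} {x2..y2}"
    unfolding m2_def by (rule abs_diff_mean_integral_le_abs_diff_integral[OF xy2 vi2]) auto
  finally show ?thesis
    using xy1 xy2 by (simp add: m2_def ennreal_mult[symmetric] mult_ac)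
qed

lemma abs_diff_integral_Icc_le:
  fixes v :: "real \<Rightarrow> real"
  assumes p: "1 < p" and e: "0 < e" and [measurable]: "v \<in> borel_measurable borel"
    and xy: "x1 \<le> y1" "x2 \<le> y2" and fin: "besov_energy v p {x1..y1} {x2..y2} \<noteq> \<infinity>"
    and D: "\<And>t s. t \<in> {x1..y1} \<Longrightarrow> s \<in> {x2..y2} \<Longrightarrow> \<bar>t - s\<bar> \<le> D"
  shows "abs_diff_integral v {x1..y1} {x2..y2}
    \<le> ennreal ((y1 - x1) * (y2 - x2) * e + e powr (1 - p) * D^2 * enn2real (besov_energy v p {x1..y1} {x2..y2}))"
proof -
  define E where "E = enn2real (besov_energy v p {x1..y1} {x2..y2})"
  have E: "besov_energy v p {x1..y1} {x2..y2} = ennreal E" "0 \<le> E"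
    using fin by (simp_all add: E_def ennreal_enn2real_if)
  have "abs_diff_integral v {x1..y1} {x2..y2}
      \<le> ennreal e * ennreal (y2 - x2) * ennreal (y1 - x1) + ennreal (e powr (1 - p) * D^2) * ennreal E"
    using abs_diff_integral_le_besov_energy[OF p e, of v "{x1..y1}" "{x2..y2}" D] D xy E(1) by simp
  also have "\<dots> = ennreal ((y1 - x1) * (y2 - x2) * e + e powr (1 - p) * D^2 * E)"
    using xy e E(2) by (simp add: ennreal_mult[symmetric] ennreal_plus mult_ac)
  finally show ?thesis unfolding E_def .
qed

lemma osc_integral_le_besov_energy:
  fixes v :: "real \<Rightarrow> real"
  assumes p: "1 < p" and xy: "x < y" and vi: "set_integrable lborel {x..y} v"
    and v: "v \<in> borel_measurable borel" and fin: "besov_energy v p {x..y} {x..y} \<noteq> \<infinity>" and e: "0 < e"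
  shows "(LBINT t:{x..y}. \<bar>v t - mean_on v x y\<bar>)
    \<le> (y - x) * (e + e powr (1 - p) * enn2real (besov_energy v p {x..y} {x..y}))"
proof -
  define E where "E = enn2real (besov_energy v p {x..y} {x..y})"
  have "ennreal ((y - x) * (LBINT t:{x..y}. \<bar>v t - mean_on v x y\<bar>)) \<le> abs_diff_integral v {x..y} {x..y}"
    by (rule osc_integral_le_abs_diff_integral[OF xy vi v])
  also have "\<dots> \<le> ennreal ((y - x) * (y - x) * e + e powr (1 - p) * (y - x)^2 * E)"
    unfolding E_def using xy by (intro abs_diff_integral_Icc_le[OF p e v _ _ fin]) auto
  also have "(y - x) * (y - x) * e + e powr (1 - p) * (y - x)^2 * E = (y - x) * ((y - x) * (e + e powr (1 - p) * E))"
    by (simp add: power2_eq_square algebra_simps)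
  finally have "(y - x) * (LBINT t:{x..y}. \<bar>v t - mean_on v x y\<bar>) \<le> (y - x) * ((y - x) * (e + e powr (1 - p) * E))"
    using xy e by (subst (asm) ennreal_le_iff) (auto simp: E_def)
  then show ?thesis using xy by (simp add: E_def)
qed

lemma mean_osc_le_besov_energy:
  fixes v :: "real \<Rightarrow> real"
  assumes p: "1 < p" and xy: "x < y" and vi: "set_integrable lborel {x..y} v"
    and v: "v \<in> borel_measurable borel" and bound: "besov_energy v p {x..y} {x..y} \<le> ennreal \<eta>" "0 \<le> \<eta>"
  shows "mean_osc v x y \<le> 2 * \<eta> powr (1/p)"
proof -
  have fin: "besov_energy v p {x..y} {x..y} \<noteq> \<infinity>"
    using neq_top_trans[OF ennreal_neq_top bound(1)] by simp
  have "mean_osc v x y \<le> 2 * enn2real (besov_energy v p {x..y} {x..y}) powr (1/p)"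
  proof (rule le_powr_if_eps_bound[OF p])
    fix e :: real assume "0 < e"
    from osc_integral_le_besov_energy[OF p xy vi v fin this] xy
    show "mean_osc v x y \<le> e + e powr (1 - p) * enn2real (besov_energy v p {x..y} {x..y})"
      unfolding mean_osc_def by (simp add: divide_le_eq mult.commute)
  qed simp
  also have "\<dots> \<le> 2 * \<eta> powr (1/p)"
    using enn2real_leI[OF bound(2,1)] p by (simp add: powr_mono2)
  finally show ?thesis .
qed

lemma abs_mean_halves_diff_le_besov_energy:
  fixes v :: "real \<Rightarrow> real" and x y :: real
  defines "m \<equiv> (x + y) / 2"
  assumes p: "1 < p" and xy: "x < y" and vi: "set_integrable lborel {x..y} v"
    and v: "v \<in> borel_measurable borel" and fin: "besov_energy v p {x..m} {m..y} \<noteq> \<infinity>"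
  shows "\<bar>mean_on v x m - mean_on v m y\<bar> \<le> 2 * (4 * enn2real (besov_energy v p {x..m} {m..y})) powr (1/p)"
proof (rule le_powr_if_eps_bound[OF p])
  define E where "E = enn2real (besov_energy v p {x..m} {m..y})"
  define l where "l = (y - x) / 2"
  have l: "0 < l" "m - x = l" "y - m = l" "y - x = 2 * l" using xy by (auto simp: l_def m_def field_simps)
  have xm: "x < m" "m < y" using xy by (auto simp: m_def)
  fix e :: real assume e: "0 < e"
  have "ennreal (l * l * \<bar>mean_on v x m - mean_on v m y\<bar>) \<le> abs_diff_integral v {x..m} {m..y}"
    using abs_mean_diff_le_abs_diff_integral[OF xm, of v] set_integrable_subset[OF vi] xm v l by simp
  also have "\<dots> \<le> ennreal ((m - x) * (y - m) * e + e powr (1 - p) * (2 * l)^2 * E)"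
    unfolding E_def using xm l by (intro abs_diff_integral_Icc_le[OF p e v _ _ fin]) auto
  also have "(m - x) * (y - m) = l * l" using l by simp
  also have "l * l * e + e powr (1 - p) * (2 * l)^2 * E = (l * l) * (e + e powr (1 - p) * (4 * E))"
    by (simp add: power2_eq_square algebra_simps)
  finally have "(l * l) * \<bar>mean_on v x m - mean_on v m y\<bar> \<le> (l * l) * (e + e powr (1 - p) * (4 * E))"
    using l e by (subst (asm) ennreal_le_iff) (auto simp: E_def)
  then show "\<bar>mean_on v x m - mean_on v m y\<bar> \<le> e + e powr (1 - p) * (4 * E)"
    using l by (simp add: mult_le_cancel_left_pos)
qed simp

section \<open>A dyadic exponential estimate\<close>

lemma enn2real_besov_energy_Icc_split:
  assumes "x \<le> m" "m \<le> y" and v: "v \<in> borel_measurable borel"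
    and fin: "besov_energy v p {x..y} {x..y} \<noteq> \<infinity>"
  shows "enn2real (besov_energy v p {x..m} {x..m}) + enn2real (besov_energy v p {m..y} {m..y})
      + enn2real (besov_energy v p {x..m} {m..y}) \<le> enn2real (besov_energy v p {x..y} {x..y})"
proof -
  have split: "besov_energy v p {x..m} {x..m} + besov_energy v p {m..y} {m..y} + besov_energy v p {x..m} {m..y}
      \<le> besov_energy v p {x..y} {x..y}"
    by (rule besov_energy_Icc_split[OF assms(1,2) v])
  have "besov_energy v p {x..m} {x..m} + besov_energy v p {m..y} {m..y} + besov_energy v p {x..m} {m..y} < \<infinity>"
    using fin by (intro order.strict_trans1[OF split]) (simp add: less_top[symmetric])
  with enn2real_mono[OF split] fin show ?thesis
    by (simp add: enn2real_plus less_top)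
qed

lemma abs_exp_integral_diff_le_osc_integral:
  fixes v :: "real \<Rightarrow> real"
  assumes [measurable]: "v \<in> borel_measurable borel" and bnd: "\<And>t. \<bar>v t\<bar> \<le> M" and xy: "x < y"
  shows "\<bar>(LBINT t:{x..y}. exp (v t - c)) - (y - x) * exp (mean_on v x y - c)\<bar>
    \<le> exp (M - c) * (LBINT t:{x..y}. \<bar>v t - mean_on v x y\<bar>)"
proof -
  define m where "m = mean_on v x y"
  have vi: "set_integrable lborel {x..y} v" by (rule set_integrable_Icc_bounded[OF _ bnd]) simp
  have m: "\<bar>m\<bar> \<le> M" unfolding m_def by (rule abs_mean_on_le[OF xy vi bnd])
  have ei: "set_integrable lborel {x..y} (\<lambda>t. exp (v t - c))"
    by (rule set_integrable_Icc_bounded[where M="exp (M - c)"]) (use bnd in \<open>auto simp: abs_le_iff\<close>)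
  have di: "set_integrable lborel {x..y} (\<lambda>t. exp (v t - c) - exp (m - c))"
    by (rule set_integral_diff(1)[OF ei set_integrable_const_Icc])
  have "(LBINT t:{x..y}. exp (v t - c)) - (y - x) * exp (m - c) = (LBINT t:{x..y}. exp (v t - c) - exp (m - c))"
    using xy by (simp add: set_integral_diff(2)[OF ei set_integrable_const_Icc] set_integral_const_Icc)
  also have "\<bar>\<dots>\<bar> \<le> (LBINT t:{x..y}. \<bar>exp (v t - c) - exp (m - c)\<bar>)"
    using set_integral_norm_bound[OF di] by simp
  also have "\<dots> \<le> (LBINT t:{x..y}. exp (M - c) * \<bar>v t - m\<bar>)"
  proof (rule set_integral_mono)
    show "set_integrable lborel {x..y} (\<lambda>t. exp (M - c) * \<bar>v t - m\<bar>)"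
      by (intro set_integrable_mult_right set_integrable_abs set_integral_diff(1)[OF vi set_integrable_const_Icc])
    fix t
    show "\<bar>exp (v t - c) - exp (m - c)\<bar> \<le> exp (M - c) * \<bar>v t - m\<bar>"
      using abs_exp_diff_le[of "v t - c" "M - c" "m - c"] bnd[of t] m by (simp add: abs_le_iff)
  qed (rule set_integrable_abs[OF di])
  finally show ?thesis unfolding m_def by simp
qed

text \<open>For \<open>J\<close> ranging over the \<open>2^k\<close> dyadic subintervals of generation \<open>k\<close> of \<open>I = [x, y]\<close>,
  \<open>dyadic_exp_mean v k x y\<close> is the average of \<open>exp (v\<^sub>J - v\<^sub>I)\<close> and \<open>dyadic_osc v k x y\<close> is the
  sum of \<open>\<integral>\<^sub>J \<bar>v - v\<^sub>J\<bar>\<close>.\<close>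
fun dyadic_exp_mean :: "(real \<Rightarrow> real) \<Rightarrow> nat \<Rightarrow> real \<Rightarrow> real \<Rightarrow> real" where
  "dyadic_exp_mean v 0 x y = 1"
| "dyadic_exp_mean v (Suc k) x y =
    (exp (mean_on v x ((x+y)/2) - mean_on v x y) * dyadic_exp_mean v k x ((x+y)/2)
     + exp (mean_on v ((x+y)/2) y - mean_on v x y) * dyadic_exp_mean v k ((x+y)/2) y) / 2"

fun dyadic_osc :: "(real \<Rightarrow> real) \<Rightarrow> nat \<Rightarrow> real \<Rightarrow> real \<Rightarrow> real" where
  "dyadic_osc v 0 x y = (LBINT t:{x..y}. \<bar>v t - mean_on v x y\<bar>)"
| "dyadic_osc v (Suc k) x y = dyadic_osc v k x ((x+y)/2) + dyadic_osc v k ((x+y)/2) y"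

lemma abs_exp_integral_diff_le_dyadic_osc:
  fixes v :: "real \<Rightarrow> real"
  assumes [measurable]: "v \<in> borel_measurable borel" and bnd: "\<And>t. \<bar>v t\<bar> \<le> M"
  shows "x < y \<Longrightarrow> \<bar>(LBINT t:{x..y}. exp (v t - c)) - (y - x) * exp (mean_on v x y - c) * dyadic_exp_mean v k x y\<bar>
    \<le> exp (M - c) * dyadic_osc v k x y"
proof (induction k arbitrary: x y)
  case 0
  then show ?case using abs_exp_integral_diff_le_osc_integral[OF _ bnd] by simp
next
  case (Suc k)
  define m where "m = (x + y) / 2"
  have xm: "x < m" "m < y" using Suc.prems by (auto simp: m_def)
  have "set_integrable lborel {x..y} (\<lambda>t. exp (v t - c))"
    by (rule set_integrable_Icc_bounded[where M="exp (M - c)"]) (use bnd in \<open>auto simp: abs_le_iff\<close>)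
  then have int_split: "(LBINT t:{x..y}. exp (v t - c)) = (LBINT t:{x..m}. exp (v t - c)) + (LBINT t:{m..y}. exp (v t - c))"
    using xm by (intro set_integral_Icc_split) auto
  have l: "m - x = (y - x) / 2" "y - m = (y - x) / 2" by (simp_all add: m_def field_simps)
  have exp_split: "(y - x) * exp (mean_on v x y - c) * dyadic_exp_mean v (Suc k) x y
      = (m - x) * exp (mean_on v x m - c) * dyadic_exp_mean v k x m
        + (y - m) * exp (mean_on v m y - c) * dyadic_exp_mean v k m y"
    unfolding dyadic_exp_mean.simps m_def[symmetric] l by (simp add: field_simps exp_diff)
  have "\<bar>(LBINT t:{x..y}. exp (v t - c)) - (y - x) * exp (mean_on v x y - c) * dyadic_exp_mean v (Suc k) x y\<bar>
      \<le> \<bar>(LBINT t:{x..m}. exp (v t - c)) - (m - x) * exp (mean_on v x m - c) * dyadic_exp_mean v k x m\<bar>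
       + \<bar>(LBINT t:{m..y}. exp (v t - c)) - (y - m) * exp (mean_on v m y - c) * dyadic_exp_mean v k m y\<bar>"
    unfolding int_split exp_split by (metis abs_triangle_ineq add_diff_add)
  also have "\<dots> \<le> exp (M - c) * dyadic_osc v k x m + exp (M - c) * dyadic_osc v k m y"
    using Suc.IH[OF xm(1)] Suc.IH[OF xm(2)] by (rule add_mono)
  also have "\<dots> = exp (M - c) * dyadic_osc v (Suc k) x y"
    by (simp add: m_def distrib_left)
  finally show ?case .
qed

lemma dyadic_osc_nonneg: "0 \<le> dyadic_osc v k x y"
  by (induction k arbitrary: x y) (auto simp: set_lebesgue_integral_def intro!: Bochner_Integration.integral_nonneg)

lemma dyadic_osc_le:
  fixes v :: "real \<Rightarrow> real"
  assumes p: "1 < p" and v: "v \<in> borel_measurable borel" and vi: "\<And>a b. set_integrable lborel {a..b} v"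
    and fin: "\<And>a b. besov_energy v p {a..b} {a..b} \<noteq> \<infinity>" and e: "0 < e"
  shows "x < y \<Longrightarrow> dyadic_osc v k x y
    \<le> (y - x) * e + (y - x) * (1/2)^k * (e powr (1 - p) * enn2real (besov_energy v p {x..y} {x..y}))"
proof (induction k arbitrary: x y)
  case 0
  then show ?case
    using osc_integral_le_besov_energy[OF p 0 vi v fin e] by (simp add: distrib_left)
next
  case (Suc k)
  define m where "m = (x + y) / 2"
  have xm: "x < m" "m < y" using Suc.prems by (auto simp: m_def)
  have l: "m - x = (y - x) / 2" "y - m = (y - x) / 2" by (simp_all add: m_def field_simps)
  define E E1 E2 where "E = enn2real (besov_energy v p {x..y} {x..y})"
    and "E1 = enn2real (besov_energy v p {x..m} {x..m})" and "E2 = enn2real (besov_energy v p {m..y} {m..y})"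
  have "E1 + E2 + enn2real (besov_energy v p {x..m} {m..y}) \<le> E"
    unfolding E_def E1_def E2_def using xm by (intro enn2real_besov_energy_Icc_split[OF _ _ v fin]) auto
  then have "E1 + E2 \<le> E" using enn2real_nonneg[of "besov_energy v p {x..m} {m..y}"] by linarith
  have "dyadic_osc v (Suc k) x y = dyadic_osc v k x m + dyadic_osc v k m y" by (simp add: m_def)
  also have "\<dots> \<le> ((m - x) * e + (m - x) * (1/2)^k * (e powr (1 - p) * E1))
                 + ((y - m) * e + (y - m) * (1/2)^k * (e powr (1 - p) * E2))"
    unfolding E1_def E2_def using Suc.IH[OF xm(1)] Suc.IH[OF xm(2)] by (rule add_mono)
  also have "\<dots> = (y - x) * e + (y - x) * (1/2)^(Suc k) * (e powr (1 - p) * (E1 + E2))"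
    unfolding l by (simp add: field_simps)
  also have "\<dots> \<le> (y - x) * e + (y - x) * (1/2)^(Suc k) * (e powr (1 - p) * E)"
    using \<open>E1 + E2 \<le> E\<close> xm by (intro add_left_mono mult_left_mono) auto
  finally show ?case unfolding E_def .
qed

lemma dyadic_osc_tendsto_zero:
  fixes v :: "real \<Rightarrow> real"
  assumes p: "1 < p" and v: "v \<in> borel_measurable borel" and vi: "\<And>a b. set_integrable lborel {a..b} v"
    and fin: "\<And>a b. besov_energy v p {a..b} {a..b} \<noteq> \<infinity>" and xy: "x < y"
  shows "(\<lambda>k. dyadic_osc v k x y) \<longlonglongrightarrow> 0"
proof (rule tendsto_sandwich[OF _ _ tendsto_const])
  define E where "E = enn2real (besov_energy v p {x..y} {x..y})"
  define r where "r = 2 powr (-1/p)"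
  have r: "0 < r" "r < 1"
    using p by (auto simp: r_def powr_less_one)
  show "(\<lambda>k. (y - x) * (1 + E) * r ^ k) \<longlonglongrightarrow> 0"
    using r by (intro tendsto_mult_right_zero LIMSEQ_power_zero) auto
  \<comment> \<open>Choosing \<open>e = r ^ k\<close> in \<open>dyadic_osc_le\<close> balances both error terms.\<close>
  have "dyadic_osc v k x y \<le> (y - x) * (1 + E) * r ^ k" for k
  proof -
    have rk: "r ^ k = 2 powr (- real k / p)"
      unfolding r_def by (simp add: powr_realpow[symmetric] powr_powr)
    have "(1/2::real)^k = 2 powr (- real k)"
      by (simp add: powr_minus_divide powr_realpow power_one_over)
    then have "(r ^ k) powr (1 - p) * (1/2)^k = 2 powr (- real k / p * (1 - p) + - real k)"
      by (simp add: rk powr_powr powr_add[symmetric])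
    also have "- real k / p * (1 - p) + - real k = - real k / p"
      using p by (simp add: field_simps)
    finally have balance: "(r ^ k) powr (1 - p) * (1/2)^k = r ^ k" by (simp add: rk)
    have "dyadic_osc v k x y \<le> (y - x) * r ^ k + (y - x) * (1/2)^k * ((r ^ k) powr (1 - p) * E)"
      unfolding E_def using r xy by (intro dyadic_osc_le[OF p v vi fin]) auto
    also have "\<dots> = (y - x) * r ^ k + (y - x) * ((r ^ k) powr (1 - p) * (1/2)^k) * E"
      by (simp add: mult_ac)
    also have "\<dots> = (y - x) * (1 + E) * r ^ k"
      unfolding balance by (simp add: algebra_simps)
    finally show ?thesis .
  qed
  then show "\<forall>\<^sub>F k in sequentially. dyadic_osc v k x y \<le> (y - x) * (1 + E) * r ^ k" by simp
qed (simp add: dyadic_osc_nonneg)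

lemma dyadic_exp_mean_le:
  fixes v :: "real \<Rightarrow> real"
  assumes p: "1 < p" and v: "v \<in> borel_measurable borel" and vi: "\<And>a b. set_integrable lborel {a..b} v"
    and bound: "\<And>a b c d. besov_energy v p {a..b} {c..d} \<le> ennreal \<eta>" and \<eta>: "0 \<le> \<eta>"
    and small: "2 * (4 * \<eta>) powr (1/p) \<le> min 1 ((2 powr (1/p) - 1) / 2)"
  shows "x < y \<Longrightarrow> dyadic_exp_mean v k x y
    \<le> 1 + dyadic_const p * enn2real (besov_energy v p {x..y} {x..y}) powr (1/p)"
proof (induction k arbitrary: x y)
  case 0
  then show ?case using dyadic_const_pos[of p] p by simp
next
  case (Suc k)
  define m where "m = (x + y) / 2"
  have xm: "x < m" "m < y" using Suc.prems by (auto simp: m_def)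
  have fin: "besov_energy v p {a..b} {c..d} \<noteq> \<infinity>" for a b c d
    using neq_top_trans[OF ennreal_neq_top bound] by simp
  define d where "d = mean_on v x m - mean_on v m y"
  have "mean_on v x y = (mean_on v x m + mean_on v m y) / 2"
    unfolding m_def by (rule mean_on_midpoint[OF Suc.prems vi])
  then have halves: "mean_on v x m - mean_on v x y = d / 2" "mean_on v m y - mean_on v x y = - d / 2"
    by (simp_all add: d_def field_simps)
  define E E1 E2 E12 where "E = enn2real (besov_energy v p {x..y} {x..y})"
    and "E1 = enn2real (besov_energy v p {x..m} {x..m})" and "E2 = enn2real (besov_energy v p {m..y} {m..y})"
    and "E12 = enn2real (besov_energy v p {x..m} {m..y})"
  have split: "E1 + E2 + E12 \<le> E"
    unfolding E_def E1_def E2_def E12_def using xm by (intro enn2real_besov_energy_Icc_split[OF _ _ v fin]) auto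
  have d: "\<bar>d\<bar> \<le> 2 * (4 * E12) powr (1/p)"
    unfolding d_def E12_def m_def by (rule abs_mean_halves_diff_le_besov_energy[OF p Suc.prems vi v fin])
  have "E12 \<le> \<eta>" unfolding E12_def by (rule enn2real_leI[OF \<eta> bound])
  then have "(4 * E12) powr (1/p) \<le> (4 * \<eta>) powr (1/p)" using p by (intro powr_mono2) (auto simp: E12_def)
  with d small have d_small: "\<bar>d\<bar> \<le> 1" "\<bar>d\<bar> \<le> (2 powr (1/p) - 1) / 2" by auto
  have "dyadic_exp_mean v (Suc k) x y = (exp (d/2) * dyadic_exp_mean v k x m + exp (- d/2) * dyadic_exp_mean v k m y) / 2"
    unfolding dyadic_exp_mean.simps m_def[symmetric] halves by simp
  also have "\<dots> \<le> (exp (d/2) * (1 + dyadic_const p * E1 powr (1/p))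
      + exp (- d/2) * (1 + dyadic_const p * E2 powr (1/p))) / 2"
    unfolding E1_def E2_def by (intro divide_right_mono add_mono mult_left_mono Suc.IH xm) auto
  also have "\<dots> \<le> 1 + dyadic_const p * E powr (1/p)"
    by (rule dyadic_step_le[OF p _ _ _ split d d_small]) (auto simp: E1_def E2_def E12_def)
  finally show ?case unfolding E_def .
qed

lemma exp_osc_integral_le_if_bounded:
  fixes v :: "real \<Rightarrow> real"
  assumes p: "1 < p" and v[measurable]: "v \<in> borel_measurable borel" and bnd: "\<And>t. \<bar>v t\<bar> \<le> M"
    and bound: "\<And>a b c d. besov_energy v p {a..b} {c..d} \<le> ennreal \<eta>" and \<eta>: "0 \<le> \<eta>"
    and small: "2 * (4 * \<eta>) powr (1/p) \<le> min 1 ((2 powr (1/p) - 1) / 2)"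
    and xy: "x < y"
  shows "(LBINT t:{x..y}. exp (v t - mean_on v x y)) \<le> (y - x) * (1 + dyadic_const p * \<eta> powr (1/p))"
proof -
  define c where "c = mean_on v x y"
  define C where "C = 1 + dyadic_const p * \<eta> powr (1/p)"
  have vi: "set_integrable lborel {a..b} v" for a b by (rule set_integrable_Icc_bounded[OF v bnd])
  have fin: "besov_energy v p {a..b} {c..d} \<noteq> \<infinity>" for a b c d
    using neq_top_trans[OF ennreal_neq_top bound] by simp
  have "dyadic_exp_mean v k x y \<le> C" for k
  proof -
    have "dyadic_exp_mean v k x y \<le> 1 + dyadic_const p * enn2real (besov_energy v p {x..y} {x..y}) powr (1/p)"
      by (rule dyadic_exp_mean_le[OF p v vi bound \<eta> small xy])
    also have "\<dots> \<le> C"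
      using enn2real_leI[OF \<eta> bound] dyadic_const_pos[of p] p unfolding C_def
      by (intro add_left_mono mult_left_mono powr_mono2) auto
    finally show ?thesis .
  qed
  note mean_le = this
  have approx: "(LBINT t:{x..y}. exp (v t - c)) \<le> (y - x) * C + exp (M - c) * dyadic_osc v k x y" for k
  proof -
    have "(y - x) * dyadic_exp_mean v k x y \<le> (y - x) * C"
      using mean_le[of k] xy by (intro mult_left_mono) auto
    moreover have "\<bar>(LBINT t:{x..y}. exp (v t - c)) - (y - x) * exp (c - c) * dyadic_exp_mean v k x y\<bar>
        \<le> exp (M - c) * dyadic_osc v k x y"
      unfolding c_def by (rule abs_exp_integral_diff_le_dyadic_osc[OF v bnd xy])
    ultimately show ?thesis by (simp add: abs_le_iff)
  qed
  have "(\<lambda>k. (y - x) * C + exp (M - c) * dyadic_osc v k x y) \<longlonglongrightarrow> (y - x) * C"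
    using tendsto_add[OF tendsto_const tendsto_mult_right_zero[OF dyadic_osc_tendsto_zero[OF p v vi fin xy]]]
    by simp
  from LIMSEQ_le_const[OF this] approx show ?thesis unfolding c_def C_def by blast
qed

lemma nn_integral_le_if_tendsto:
  fixes f :: "nat \<Rightarrow> 'a \<Rightarrow> ennreal"
  assumes "\<And>n. f n \<in> borel_measurable M" and "\<And>x. (\<lambda>n. f n x) \<longlonglongrightarrow> g x"
    and "\<And>n. integral\<^sup>N M (f n) \<le> C"
  shows "integral\<^sup>N M g \<le> C"
proof -
  have "integral\<^sup>N M g = (\<integral>\<^sup>+x. liminf (\<lambda>n. f n x) \<partial>M)"
    using assms(2) by (intro nn_integral_cong lim_imp_Liminf[symmetric]) simp_all
  also have "\<dots> \<le> liminf (\<lambda>n. integral\<^sup>N M (f n))"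
    using assms(1) by (rule nn_integral_liminf)
  also have "\<dots> \<le> limsup (\<lambda>n. integral\<^sup>N M (f n))"
    by (rule Liminf_le_Limsup) simp
  also have "\<dots> \<le> C"
    using assms(3) by (intro Limsup_bounded) simp
  finally show ?thesis .
qed

lemma trunc_tendsto: "(\<lambda>n. trunc (real n) z) \<longlonglongrightarrow> z"
proof (rule tendsto_eventually)
  have "trunc (real n) z = z" if "nat \<lceil>\<bar>z\<bar>\<rceil> \<le> n" for n
    using that by (intro trunc_eq) linarith
  then show "\<forall>\<^sub>F n in sequentially. trunc (real n) z = z"
    unfolding eventually_sequentially by blast
qed

lemma mean_on_trunc_tendsto:
  fixes h :: "real \<Rightarrow> real"
  assumes hi: "set_integrable lborel {x..y} h" and [measurable]: "h \<in> borel_measurable borel"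
  shows "(\<lambda>n. mean_on (\<lambda>t. trunc (real n) (h t)) x y) \<longlonglongrightarrow> mean_on h x y"
proof -
  have "(\<lambda>n. LBINT t. indicator {x..y} t *\<^sub>R trunc (real n) (h t)) \<longlonglongrightarrow> (LBINT t. indicator {x..y} t *\<^sub>R h t)"
  proof (rule integral_dominated_convergence[where w="\<lambda>t. indicator {x..y} t *\<^sub>R \<bar>h t\<bar>"])
    show "integrable lborel (\<lambda>t. indicator {x..y} t *\<^sub>R \<bar>h t\<bar>)"
      using set_integrable_abs[OF hi] unfolding set_integrable_def .
    show "AE t in lborel. (\<lambda>n. indicator {x..y} t *\<^sub>R trunc (real n) (h t)) \<longlonglongrightarrow> indicator {x..y} t *\<^sub>R h t"
      by (intro AE_I2 tendsto_intros trunc_tendsto)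
    show "AE t in lborel. norm (indicator {x..y} t *\<^sub>R trunc (real n) (h t)) \<le> indicator {x..y} t *\<^sub>R \<bar>h t\<bar>" for n
      using abs_trunc_diff_le[of "real n" "h _" 0] by (intro AE_I2) (auto simp: indicator_def trunc_def)
  qed auto
  then show ?thesis unfolding mean_on_def set_lebesgue_integral_def divide_inverse by (rule tendsto_mult_right)
qed

lemma exp_osc_integral_le:
  fixes h :: "real \<Rightarrow> real"
  assumes p: "1 < p" and [measurable]: "h \<in> borel_measurable borel"
    and hi: "\<And>a b. set_integrable lborel {a..b} h"
    and bound: "\<And>a b c d. besov_energy h p {a..b} {c..d} \<le> ennreal \<eta>" and \<eta>: "0 \<le> \<eta>"
    and small: "2 * (4 * \<eta>) powr (1/p) \<le> min 1 ((2 powr (1/p) - 1) / 2)"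
    and xy: "x < y"
  shows "(\<integral>\<^sup>+t. ennreal (exp (h t - mean_on h x y)) * indicator {x..y} t \<partial>lborel)
    \<le> ennreal ((y - x) * (1 + dyadic_const p * \<eta> powr (1/p)))"
proof (rule nn_integral_le_if_tendsto)
  define v where "v n t = trunc (real n) (h t)" for n :: nat and t
  have [measurable]: "v n \<in> borel_measurable borel" for n unfolding v_def by measurable
  have v_bounded: "\<bar>v n t\<bar> \<le> real n" for n t unfolding v_def by (rule abs_trunc_le) simp
  have v_bound: "besov_energy (v n) p {a..b} {c..d} \<le> ennreal \<eta>" for n a b c d
    using besov_energy_mono[OF abs_trunc_diff_le] bound[of a b c d] p unfolding v_def
    by (meson order.trans less_trans zero_less_one)
  show "(\<lambda>n. ennreal (exp (v n t - mean_on (v n) x y)) * indicator {x..y} t)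
      \<longlonglongrightarrow> ennreal (exp (h t - mean_on h x y)) * indicator {x..y} t" for t
    unfolding v_def
    by (intro tendsto_intros tendsto_ennrealI trunc_tendsto mean_on_trunc_tendsto hi) measurable
  fix n
  have "set_integrable lborel {x..y} (\<lambda>t. exp (v n t - mean_on (v n) x y))"
    using v_bounded[of n] by (intro set_integrable_Icc_bounded[where M="exp (real n - mean_on (v n) x y)"])
      (auto simp: abs_le_iff)
  then have "(\<integral>\<^sup>+t. ennreal (exp (v n t - mean_on (v n) x y)) * indicator {x..y} t \<partial>lborel)
      = ennreal (LBINT t:{x..y}. exp (v n t - mean_on (v n) x y))"
    by (rule ennreal_set_integral_eq_nn_integral[symmetric]) simp
  also have "\<dots> \<le> ennreal ((y - x) * (1 + dyadic_const p * \<eta> powr (1/p)))"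
    by (intro ennreal_leI exp_osc_integral_le_if_bounded[OF p _ v_bounded v_bound \<eta> small xy]) simp
  finally show "(\<integral>\<^sup>+t. ennreal (exp (v n t - mean_on (v n) x y)) * indicator {x..y} t \<partial>lborel)
      \<le> ennreal ((y - x) * (1 + dyadic_const p * \<eta> powr (1/p)))" .
qed measurable

section \<open>Truncation of functions in \<open>B\<^sub>p\<close>\<close>

lemma Bp_realD:
  assumes "u \<in> Bp_real p"
  shows "u \<in> borel_measurable borel" "(\<integral>\<^sup>+t. \<integral>\<^sup>+s. besov_kernel u p t s \<partial>lborel \<partial>lborel) < \<infinity>"
  using assms unfolding Bp_real_def besov_kernel_def by auto

lemma set_integrable_Icc_if_Bp_real:
  fixes u :: "real \<Rightarrow> real"
  assumes p: "1 < p" and u: "u \<in> Bp_real p"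
  shows "set_integrable lborel {a..b} u"
proof -
  note [measurable] = Bp_realD(1)[OF u]
  have "AE t in lborel. (\<integral>\<^sup>+s. besov_kernel u p t s \<partial>lborel) \<noteq> \<infinity>"
    using Bp_realD(2)[OF u] besov_kernel_measurable_pair[of u p]
    by (intro nn_integral_PInf_AE lborel.borel_measurable_nn_integral) auto
  moreover have "ae_filter lborel \<noteq> (bot :: real filter)" by (simp add: ae_filter_eq_bot_iff)
  ultimately obtain t0 where t0: "(\<integral>\<^sup>+s. besov_kernel u p t0 s \<partial>lborel) \<noteq> \<infinity>"
    by (meson eventually_happens)
  define D where "D = \<bar>a - t0\<bar> + \<bar>b - t0\<bar>"
  have "ennreal (norm (indicator {a..b} s *\<^sub>R u s))
      \<le> ennreal (\<bar>u t0\<bar> + 1) * indicator {a..b} s + ennreal (D^2) * (besov_kernel u p t0 s * indicator {a..b} s)"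
    for s
  proof (cases "s \<in> {a..b}")
    case True
    then have "ennreal \<bar>u t0 - u s\<bar> \<le> ennreal 1 + ennreal (D^2) * besov_kernel u p t0 s"
      using abs_diff_le_besov_kernel[OF p zero_less_one, of t0 s D u] by (auto simp: D_def)
    moreover have "\<bar>u s\<bar> \<le> \<bar>u t0\<bar> + \<bar>u t0 - u s\<bar>" by arith
    then have "ennreal \<bar>u s\<bar> \<le> ennreal \<bar>u t0\<bar> + ennreal \<bar>u t0 - u s\<bar>"
      by (metis ennreal_leI ennreal_plus abs_ge_zero)
    ultimately show ?thesis
      using True by (simp add: ennreal_plus add.assoc) (meson add_left_mono order.trans)
  qed simp
  then have "(\<integral>\<^sup>+s. ennreal (norm (indicator {a..b} s *\<^sub>R u s)) \<partial>lborel)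
      \<le> (\<integral>\<^sup>+s. ennreal (\<bar>u t0\<bar> + 1) * indicator {a..b} s
             + ennreal (D^2) * (besov_kernel u p t0 s * indicator {a..b} s) \<partial>lborel)"
    by (rule nn_integral_mono)
  also have "\<dots> = ennreal (\<bar>u t0\<bar> + 1) * emeasure lborel {a..b}
      + ennreal (D^2) * (\<integral>\<^sup>+s. besov_kernel u p t0 s * indicator {a..b} s \<partial>lborel)"
    by (subst nn_integral_add) (auto simp: nn_integral_cmult nn_integral_cmult_indicator)
  also have "\<dots> < \<infinity>"
  proof -
    have "(\<integral>\<^sup>+s. besov_kernel u p t0 s * indicator {a..b} s \<partial>lborel) \<le> (\<integral>\<^sup>+s. besov_kernel u p t0 s \<partial>lborel)"
      by (intro nn_integral_mono) (auto simp: indicator_def)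
    with t0 show ?thesis
      by (simp add: emeasure_lborel_Icc_eq ennreal_mult_less_top less_top order_le_less_trans)
  qed
  finally show ?thesis unfolding set_integrable_def by (intro integrableI_bounded) auto
qed

definition tail_energy :: "(real \<Rightarrow> real) \<Rightarrow> real \<Rightarrow> nat \<Rightarrow> ennreal" where
  "tail_energy u p N = (\<integral>\<^sup>+t. \<integral>\<^sup>+s. besov_kernel u p t s
     * (if real N < \<bar>u t\<bar> \<or> real N < \<bar>u s\<bar> then 1 else 0) \<partial>lborel \<partial>lborel)"

lemma tail_energy_tendsto_zero:
  assumes u: "u \<in> Bp_real p"
  shows "(\<lambda>N. tail_energy u p N) \<longlonglongrightarrow> 0"
proof -
  note [measurable] = Bp_realD(1)[OF u]
  define F where "F N z = besov_kernel u p (fst z) (snd z)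
    * (if real N < \<bar>u (fst z)\<bar> \<or> real N < \<bar>u (snd z)\<bar> then 1 else 0)" for N :: nat and z
  have [measurable]: "F N \<in> borel_measurable (lborel \<Otimes>\<^sub>M lborel)" for N
    unfolding F_def besov_kernel_def by measurable
  have tail: "tail_energy u p N = integral\<^sup>N (lborel \<Otimes>\<^sub>M lborel) (F N)" for N
    unfolding tail_energy_def using lborel.nn_integral_fst[of "F N"] by (simp add: F_def)
  have dec: "decseq F"
  proof (rule decseq_SucI)
    fix N show "F (Suc N) \<le> F N" unfolding le_fun_def F_def by (auto intro!: mult_left_mono)
  qed
  have "integral\<^sup>N (lborel \<Otimes>\<^sub>M lborel) (F N)
      \<le> integral\<^sup>N (lborel \<Otimes>\<^sub>M lborel) (\<lambda>z. besov_kernel u p (fst z) (snd z))" for N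
    unfolding F_def by (intro nn_integral_mono) auto
  also have "\<dots> < \<infinity>"
    using lborel.nn_integral_fst[of "\<lambda>z. besov_kernel u p (fst z) (snd z)"] Bp_realD(2)[OF u]
      besov_kernel_measurable_pair[of u p]
    by (simp add: case_prod_beta')
  finally have fin: "integral\<^sup>N (lborel \<Otimes>\<^sub>M lborel) (F N) < \<infinity>" for N .
  have F_INF: "(INF N. F N z) = 0" for z
  proof -
    define N0 where "N0 = nat \<lceil>\<bar>u (fst z)\<bar> + \<bar>u (snd z)\<bar>\<rceil>"
    have "\<bar>u (fst z)\<bar> + \<bar>u (snd z)\<bar> \<le> real N0" unfolding N0_def by (rule real_nat_ceiling_ge)
    then have "F N0 z = 0" unfolding F_def by auto
    then show ?thesis by (metis INF_lower bot.extremum_uniqueI UNIV_I bot_ennreal)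
  qed
  have "(\<integral>\<^sup>+z. (INF N. F N z) \<partial>(lborel \<Otimes>\<^sub>M lborel)) = (INF N. integral\<^sup>N (lborel \<Otimes>\<^sub>M lborel) (F N))"
    by (rule nn_integral_monotone_convergence_INF_decseq[OF dec _ fin]) simp
  then have "(INF N. tail_energy u p N) = 0" unfolding tail F_INF by simp
  moreover have "decseq (\<lambda>N. tail_energy u p N)"
    unfolding decseq_def tail
  proof (intro allI impI nn_integral_mono)
    fix m n :: nat and z assume "m \<le> n"
    then show "F n z \<le> F m z" by (rule le_funD[OF decseqD[OF dec]])
  qed
  ultimately show ?thesis using LIMSEQ_INF[of "\<lambda>N. tail_energy u p N"] by simp
qed

lemma besov_energy_trunc_remainder_le:
  fixes u :: "real \<Rightarrow> real"
  assumes p: "0 < p"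
  shows "besov_energy (\<lambda>t. u t - trunc (real N) (u t)) p A B \<le> tail_energy u p N"
proof -
  have "besov_kernel (\<lambda>t. u t - trunc (real N) (u t)) p t s
      \<le> besov_kernel u p t s * (if real N < \<bar>u t\<bar> \<or> real N < \<bar>u s\<bar> then 1 else 0)" for t s
  proof (cases "real N < \<bar>u t\<bar> \<or> real N < \<bar>u s\<bar>")
    case True
    then show ?thesis
      unfolding besov_kernel_def using abs_trunc_remainder_diff_le[of "u t" "real N" "u s"] p
      by (auto intro!: ennreal_leI divide_right_mono powr_mono2)
  qed (simp add: besov_kernel_def trunc_eq)
  note kernel_le = this
  have "(\<integral>\<^sup>+s. besov_kernel (\<lambda>t. u t - trunc (real N) (u t)) p t s * indicator B s \<partial>lborel) * indicator A t
      \<le> (\<integral>\<^sup>+s. besov_kernel u p t s * (if real N < \<bar>u t\<bar> \<or> real N < \<bar>u s\<bar> then 1 else 0) \<partial>lborel)" for t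
  proof -
    have "(\<integral>\<^sup>+s. besov_kernel (\<lambda>t. u t - trunc (real N) (u t)) p t s * indicator B s \<partial>lborel) * indicator A t
        \<le> (\<integral>\<^sup>+s. besov_kernel (\<lambda>t. u t - trunc (real N) (u t)) p t s \<partial>lborel)"
      by (auto intro!: nn_integral_mono simp: indicator_def)
    also have "\<dots> \<le> (\<integral>\<^sup>+s. besov_kernel u p t s
        * (if real N < \<bar>u t\<bar> \<or> real N < \<bar>u s\<bar> then 1 else 0) \<partial>lborel)"
      by (rule nn_integral_mono[OF kernel_le])
    finally show ?thesis .
  qed
  then show ?thesis
    unfolding besov_energy_def tail_energy_def by (rule nn_integral_mono)
qed

lemma Bp_real_trunc_remainder_small:
  assumes "u \<in> Bp_real p" "0 < p" "0 < \<eta>"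
  shows "\<exists>N. \<forall>A B. besov_energy (\<lambda>t. u t - trunc (real N) (u t)) p A B \<le> ennreal \<eta>"
proof -
  have "\<forall>\<^sub>F N in sequentially. tail_energy u p N < ennreal \<eta>"
    using order_tendstoD(2)[OF tail_energy_tendsto_zero[OF assms(1)], of "ennreal \<eta>"] assms(3) by simp
  then obtain N where "tail_energy u p N < ennreal \<eta>"
    unfolding eventually_sequentially by blast
  then show ?thesis
    using besov_energy_trunc_remainder_le[OF assms(2)] by (blast intro: order.trans less_imp_le)
qed

lemma set_integrable_trunc_remainder_if_Bp_real:
  assumes p: "1 < p" and u: "u \<in> Bp_real p"
  shows "set_integrable lborel {a..b} (\<lambda>t. u t - trunc (real N) (u t))"
proof -
  note [measurable] = Bp_realD(1)[OF u]
  have "set_integrable lborel {a..b} (\<lambda>t. trunc (real N) (u t))"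
    by (rule set_integrable_Icc_bounded[where M="real N"]) (simp_all add: abs_trunc_le)
  with set_integrable_Icc_if_Bp_real[OF p u] show ?thesis by (rule set_integral_diff(1))
qed

lemma bmo_norm_le: "(\<And>a b. a < b \<Longrightarrow> mean_osc u a b \<le> C) \<Longrightarrow> bmo_norm u \<le> ereal C"
  unfolding bmo_norm_def by (auto intro!: SUP_least)

lemma in_BMO_closure_Linf_if_Bp_real:
  fixes u :: "real \<Rightarrow> real"
  assumes p: "1 < p" and u: "u \<in> Bp_real p"
  shows "in_BMO_closure_Linf u"
  unfolding in_BMO_closure_Linf_def
proof (intro conjI allI impI)
  note [measurable] = Bp_realD(1)[OF u]
  show "loc_integrable u"
    unfolding loc_integrable_def using set_integrable_Icc_if_Bp_real[OF p u] by blast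
  fix \<epsilon> :: real assume \<epsilon>: "0 < \<epsilon>"
  define \<eta> where "\<eta> = (\<epsilon> / 4) powr p"
  have \<eta>: "0 < \<eta>" "\<eta> powr (1/p) = \<epsilon> / 4" unfolding \<eta>_def using \<epsilon> p by (simp_all add: powr_powr)
  obtain N where N: "\<And>A B. besov_energy (\<lambda>t. u t - trunc (real N) (u t)) p A B \<le> ennreal \<eta>"
    using Bp_real_trunc_remainder_small[OF u _ \<eta>(1)] p by auto
  define g where "g t = trunc (real N) (u t)" for t
  have g: "\<bar>g t\<bar> \<le> real N" for t unfolding g_def by (rule abs_trunc_le) simp
  have hi: "set_integrable lborel {a..b} (\<lambda>t. u t - g t)" for a b
    unfolding g_def by (rule set_integrable_trunc_remainder_if_Bp_real[OF p u])
  have "bmo_norm (\<lambda>t. u t - g t) \<le> ereal (2 * \<eta> powr (1/p))"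
    using \<eta> N by (intro bmo_norm_le mean_osc_le_besov_energy[OF p _ hi]) (auto simp: g_def)
  also have "\<dots> < ereal \<epsilon>" using \<eta> \<epsilon> by simp
  finally have "bmo_norm (\<lambda>t. u t - g t) < ereal \<epsilon>" .
  moreover have "bounded (range g)"
    using g by (intro boundedI[of _ "real N"]) auto
  moreover have "loc_integrable (\<lambda>t. u t - g t)" unfolding loc_integrable_def using hi by blast
  moreover have "g \<in> borel_measurable lborel" unfolding g_def by measurable
  ultimately show "\<exists>g. g \<in> borel_measurable lborel \<and> bounded (range g) \<and> loc_integrable (\<lambda>t. u t - g t)
      \<and> bmo_norm (\<lambda>t. u t - g t) < ereal \<epsilon>"
    by blast
qed

section \<open>The Muckenhoupt condition\<close>

lemma mean_on_le_if_nn_integral_le: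
  fixes w :: "real \<Rightarrow> real"
  assumes "a < b" "set_integrable lborel {a..b} w" "\<And>t. 0 \<le> w t" "0 \<le> K"
    and "(\<integral>\<^sup>+t. ennreal (w t) * indicator {a..b} t \<partial>lborel) \<le> ennreal ((b - a) * K)"
  shows "mean_on w a b \<le> K"
proof -
  have "ennreal (LBINT t:{a..b}. w t) \<le> ennreal ((b - a) * K)"
    using assms by (subst ennreal_set_integral_eq_nn_integral) auto
  then have "(LBINT t:{a..b}. w t) \<le> (b - a) * K"
    using assms by (subst (asm) ennreal_le_iff) auto
  then show ?thesis using assms(1) by (simp add: mean_on_def divide_le_eq mult.commute)
qed

lemma nn_integral_scaled_le:
  fixes f :: "real \<Rightarrow> real"
  assumes "(\<integral>\<^sup>+t. ennreal (f t) * indicator A t \<partial>lborel) \<le> ennreal X" "0 \<le> k"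
    and [measurable]: "f \<in> borel_measurable borel" "A \<in> sets borel"
  shows "(\<integral>\<^sup>+t. ennreal (k * f t) * indicator A t \<partial>lborel) \<le> ennreal (k * X)"
proof -
  have "(\<integral>\<^sup>+t. ennreal (k * f t) * indicator A t \<partial>lborel)
      \<le> (\<integral>\<^sup>+t. ennreal k * (ennreal (f t) * indicator A t) \<partial>lborel)"
    using assms(2) by (intro nn_integral_mono) (simp add: ennreal_mult' mult.assoc)
  also have "\<dots> = ennreal k * (\<integral>\<^sup>+t. ennreal (f t) * indicator A t \<partial>lborel)"
    by (rule nn_integral_cmult) measurable
  also have "\<dots> \<le> ennreal (k * X)"
    using mult_left_mono[OF assms(1), of "ennreal k"] assms(2) by (simp add: ennreal_mult')
  finally show ?thesis .
qed

lemma A_2_if_exp_bounds: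
  fixes w :: "real \<Rightarrow> real"
  assumes w: "is_weight w" and pos: "AE t in lborel. 0 < w t" and C: "0 \<le> C"
    and bounds: "\<And>a b. a < b \<Longrightarrow> \<exists>c.
      (\<integral>\<^sup>+t. ennreal (w t) * indicator {a..b} t \<partial>lborel) \<le> ennreal ((b - a) * (exp c * C)) \<and>
      (\<integral>\<^sup>+t. ennreal (1 / w t) * indicator {a..b} t \<partial>lborel) \<le> ennreal ((b - a) * (exp (- c) * C))"
  shows "w \<in> A_2"
  unfolding A_p_def mem_Collect_eq
proof (intro conjI exI allI impI)
  show "is_weight w" by (rule w)
  fix a b :: real assume ab: "a < b"
  obtain c where c: "(\<integral>\<^sup>+t. ennreal (w t) * indicator {a..b} t \<partial>lborel) \<le> ennreal ((b - a) * (exp c * C))"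
    "(\<integral>\<^sup>+t. ennreal (1 / w t) * indicator {a..b} t \<partial>lborel) \<le> ennreal ((b - a) * (exp (- c) * C))"
    using bounds[OF ab] by blast
  have w_nonneg: "0 \<le> w t" for t using w by (simp add: is_weight_def)
  have mean: "mean_on w a b \<le> exp c * C"
    using ab w C c(1) unfolding is_weight_def loc_integrable_def by (intro mean_on_le_if_nn_integral_le) auto
  have "(\<integral>\<^sup>+t\<in>{a..b}. dual_weight 2 w t \<partial>lborel) = (\<integral>\<^sup>+t. ennreal (1 / w t) * indicator {a..b} t \<partial>lborel)"
    using pos by (intro nn_integral_cong_AE) (auto simp: dual_weight_def powr_minus_divide)
  with c(2) have dual: "(\<integral>\<^sup>+t\<in>{a..b}. dual_weight 2 w t \<partial>lborel) \<le> ennreal ((b - a) * (exp (- c) * C))"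
    by simp
  then show "(\<integral>\<^sup>+t\<in>{a..b}. dual_weight 2 w t \<partial>lborel) < \<infinity>"
    by (simp add: order_le_less_trans)
  have "enn2real (\<integral>\<^sup>+t\<in>{a..b}. dual_weight 2 w t \<partial>lborel) / (b - a) \<le> exp (- c) * C"
    using enn2real_leI[OF _ dual] ab C by (simp add: divide_le_eq mult_ac)
  then have "mean_on w a b * (enn2real (\<integral>\<^sup>+t\<in>{a..b}. dual_weight 2 w t \<partial>lborel) / (b - a))
      \<le> (exp c * C) * (exp (- c) * C)"
    using mean ab w_nonneg C
    by (intro mult_mono) (auto simp: mean_on_def set_lebesgue_integral_def intro!: divide_nonneg_pos integral_nonneg)
  then show "mean_on w a b * (enn2real (\<integral>\<^sup>+t\<in>{a..b}. dual_weight 2 w t \<partial>lborel) / (b - a)) powr (2 - 1)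
      \<le> C * C"
    using ab by (simp add: exp_minus field_simps)
qed

lemma nn_integral_le_if_ln_close:
  fixes w h :: "real \<Rightarrow> real"
  assumes pos: "AE t in lborel. 0 < w t" and close: "\<And>t. 0 < w t \<Longrightarrow> \<bar>ln (w t) - h t\<bar> \<le> M"
    and [measurable]: "h \<in> borel_measurable borel" "A \<in> sets borel"
    and bound: "(\<integral>\<^sup>+t. ennreal (exp (h t - c)) * indicator A t \<partial>lborel) \<le> ennreal X"
  shows "(\<integral>\<^sup>+t. ennreal (w t) * indicator A t \<partial>lborel) \<le> ennreal (exp M * exp c * X)"
proof -
  have "(\<integral>\<^sup>+t. ennreal (w t) * indicator A t \<partial>lborel)
      \<le> (\<integral>\<^sup>+t. ennreal (exp M * exp c * exp (h t - c)) * indicator A t \<partial>lborel)"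
  proof (rule nn_integral_mono_AE)
    show "AE t in lborel. ennreal (w t) * indicator A t
        \<le> ennreal (exp M * exp c * exp (h t - c)) * indicator A t"
      using pos
    proof eventually_elim
      case (elim t)
      have "w t = exp (ln (w t) - h t) * exp c * exp (h t - c)"
        using elim by (simp flip: exp_add)
      also have "\<dots> \<le> exp M * exp c * exp (h t - c)"
        using close[OF elim] by (simp add: abs_le_iff)
      finally show ?case by (simp add: ennreal_leI mult_right_mono indicator_def)
    qed
  qed
  also have "\<dots> \<le> ennreal (exp M * exp c * X)"
    by (rule nn_integral_scaled_le[OF bound]) auto
  finally show ?thesis .
qed

lemma ex_small_energy_level:
  fixes p :: real
  assumes "1 < p"
  shows "\<exists>\<eta>>0. 2 * (4 * \<eta>) powr (1/p) \<le> min 1 ((2 powr (1/p) - 1) / 2)"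
proof -
  define \<delta> where "\<delta> = min 1 ((2 powr (1/p) - 1) / 2)"
  have "2 powr 0 < 2 powr (1/p)" using assms by (intro powr_less_mono) auto
  then have "0 < \<delta>" by (simp add: \<delta>_def)
  define \<eta> where "\<eta> = (\<delta> / 2) powr p / 4"
  have "(4 * \<eta>) powr (1/p) = \<delta> / 2"
    using \<open>0 < \<delta>\<close> assms by (simp add: \<eta>_def powr_powr)
  moreover have "0 < \<eta>" using \<open>0 < \<delta>\<close> by (simp add: \<eta>_def)
  ultimately show ?thesis unfolding \<delta>_def[symmetric] by (intro exI[of _ \<eta>]) simp
qed

lemma A_2_if_ln_Bp_real:
  fixes w :: "real \<Rightarrow> real"
  assumes p: "1 < p" and w: "is_weight w" and pos: "AE t in lborel. 0 < w t"
    and u: "(\<lambda>t. ln (w t)) \<in> Bp_real p"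
  shows "w \<in> A_2"
proof -
  note [measurable] = Bp_realD(1)[OF u]
  obtain \<eta> where \<eta>: "0 < \<eta>" and small: "2 * (4 * \<eta>) powr (1/p) \<le> min 1 ((2 powr (1/p) - 1) / 2)"
    using ex_small_energy_level[OF p] by blast
  obtain N where N: "\<And>A B. besov_energy (\<lambda>t. ln (w t) - trunc (real N) (ln (w t))) p A B \<le> ennreal \<eta>"
    using Bp_real_trunc_remainder_small[OF u _ \<eta>] p by auto
  define h where "h t = ln (w t) - trunc (real N) (ln (w t))" for t
  have [measurable]: "h \<in> borel_measurable borel" unfolding h_def by measurable
  have close: "\<bar>ln (w t) - h t\<bar> \<le> real N" for t
    unfolding h_def using abs_trunc_le[of "real N"] by simp
  have close_inv: "\<bar>ln (1 / w t) - - h t\<bar> \<le> real N" if "0 < 1 / w t" for t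
    using close[of t] that by (simp add: ln_div abs_minus_commute)
  have hi: "set_integrable lborel {a..b} h" for a b
    unfolding h_def by (rule set_integrable_trunc_remainder_if_Bp_real[OF p u])
  have nhi: "set_integrable lborel {a..b} (\<lambda>t. - h t)" for a b
    using set_integrable_mult_right[of "-1" lborel "{a..b}" h] hi by simp
  have h_energy: "besov_energy h p {a..b} {c..d} \<le> ennreal \<eta>" for a b c d
    unfolding h_def by (rule N)
  define C0 where "C0 = 1 + dyadic_const p * \<eta> powr (1/p)"
  have C0: "0 \<le> C0" using dyadic_const_pos[of p] p by (simp add: C0_def)
  show ?thesis
  proof (rule A_2_if_exp_bounds[OF w pos, of "exp (real N) * C0"])
    fix a b :: real assume ab: "a < b"
    define c where "c = mean_on h a b"
    have "(\<integral>\<^sup>+t. ennreal (exp (h t - c)) * indicator {a..b} t \<partial>lborel) \<le> ennreal ((b - a) * C0)"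
      unfolding c_def C0_def using \<eta> by (intro exp_osc_integral_le[OF p _ hi h_energy _ small ab]) auto
    from nn_integral_le_if_ln_close[OF pos close _ _ this]
    have "(\<integral>\<^sup>+t. ennreal (w t) * indicator {a..b} t \<partial>lborel) \<le> ennreal ((b - a) * (exp c * (exp (real N) * C0)))"
      by (simp add: mult_ac)
    moreover have "(\<integral>\<^sup>+t. ennreal (exp (- h t - - c)) * indicator {a..b} t \<partial>lborel) \<le> ennreal ((b - a) * C0)"
      using exp_osc_integral_le[OF p _ nhi _ _ small ab] \<eta> h_energy
      by (simp add: C0_def c_def besov_energy_uminus mean_on_uminus hi)
    from nn_integral_le_if_ln_close[OF _ close_inv _ _ this] pos
    have "(\<integral>\<^sup>+t. ennreal (1 / w t) * indicator {a..b} t \<partial>lborel) \<le> ennreal ((b - a) * (exp (- c) * (exp (real N) * C0)))"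
      by (simp add: mult_ac)
    ultimately show "\<exists>c. (\<integral>\<^sup>+t. ennreal (w t) * indicator {a..b} t \<partial>lborel) \<le> ennreal ((b - a) * (exp c * (exp (real N) * C0)))
        \<and> (\<integral>\<^sup>+t. ennreal (1 / w t) * indicator {a..b} t \<partial>lborel) \<le> ennreal ((b - a) * (exp (- c) * (exp (real N) * C0)))"
      by blast
  qed (use C0 in simp)
qed

theorem proposition2p3:
  fixes p :: real and w :: "real \<Rightarrow> real"
  assumes "1 < p"
    and "is_weight w"
    and "AE t in lborel. 0 < w t"
    and "(\<lambda>t. ln (w t)) \<in> Bp_real p"
  shows "in_BMO_closure_Linf (\<lambda>t. ln (w t)) \<and> w \<in> A_2 \<and> w \<in> A_infty"
proof -
  have "in_BMO_closure_Linf (\<lambda>t. ln (w t))"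
    by (rule in_BMO_closure_Linf_if_Bp_real[OF assms(1,4)])
  moreover have "w \<in> A_2"
    by (rule A_2_if_ln_Bp_real[OF assms])
  moreover from this have "w \<in> A_infty"
    unfolding A_infty_def by (intro UN_I[of 2]) auto
  ultimately show ?thesis by blast
qed

end
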